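(* If $M$ is a simple rank-$r$ matroid with no $2$-claw, then $|E(M)| \ge 2^r-1$. If equality holds then $M \cong \mathrm{PG}(r-1,2)$.
   Context: A claw of a matroid $M$ is a set that is both a flat and an independent set of $M$; a $k$-claw is a claw of size $k$. $\mathrm{PG}(r-1,2)$ is the rank-$r$ binary projective geometry. *)

theory Defs
  imports Main
begin

definition matroid :: "'a set \<Rightarrow> ('a set \<Rightarrow> bool) \<Rightarrow> bool" where
  "matroid E I \<longleftrightarrow> finite E \<and> I {} \<and> (\<forall>X. I X \<longrightarrow> X \<subseteq> E)
     \<and> (\<forall>X Y. I X \<and> Y \<subseteq> X \<longrightarrow> I Y)
     \<and> (\<forall>X Y. I X \<and> I Y \<and> card X < card Y \<longrightarrow> (\<exists>e\<in>Y - X. I (insert e X)))"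

definition mrk :: "('a set \<Rightarrow> bool) \<Rightarrow> 'a set \<Rightarrow> nat" where
  "mrk I X = Max {card Y | Y. Y \<subseteq> X \<and> I Y}"

definition matroid_rank :: "'a set \<Rightarrow> ('a set \<Rightarrow> bool) \<Rightarrow> nat" where
  "matroid_rank E I = mrk I E"

definition mclosure :: "'a set \<Rightarrow> ('a set \<Rightarrow> bool) \<Rightarrow> 'a set \<Rightarrow> 'a set" where
  "mclosure E I X = {e \<in> E. mrk I (insert e X) = mrk I X}"

definition flat :: "'a set \<Rightarrow> ('a set \<Rightarrow> bool) \<Rightarrow> 'a set \<Rightarrow> bool" where
  "flat E I X \<longleftrightarrow> X \<subseteq> E \<and> mclosure E I X = X"

definition claw :: "'a set \<Rightarrow> ('a set \<Rightarrow> bool) \<Rightarrow> 'a set \<Rightarrow> bool" where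
  "claw E I X \<longleftrightarrow> flat E I X \<and> I X"

definition simple_matroid :: "'a set \<Rightarrow> ('a set \<Rightarrow> bool) \<Rightarrow> bool" where
  "simple_matroid E I \<longleftrightarrow> (\<forall>X \<subseteq> E. card X \<le> 2 \<longrightarrow> I X)"

definition matroid_iso :: "'a set \<Rightarrow> ('a set \<Rightarrow> bool) \<Rightarrow> 'b set \<Rightarrow> ('b set \<Rightarrow> bool) \<Rightarrow> bool" where
  "matroid_iso E1 I1 E2 I2 \<longleftrightarrow>
     (\<exists>f. bij_betw f E1 E2 \<and> (\<forall>X \<subseteq> E1. I1 X \<longleftrightarrow> I2 (f ` X)))"

text \<open>Vectors of GF(2)^r are encoded as subsets of {..<r} (their supports);
  vector addition is symmetric difference. The sum of a finite family F of vectors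
  has as support the coordinates lying in an odd number of members of F.\<close>
definition gf2_sum :: "nat set set \<Rightarrow> nat set" where
  "gf2_sum F = {i. odd (card {v \<in> F. i \<in> v})}"

text \<open>Linear independence over GF(2): no nonempty subfamily sums to zero
  (coefficients in GF(2) are 0 or 1).\<close>
definition gf2_indep :: "nat set set \<Rightarrow> bool" where
  "gf2_indep S \<longleftrightarrow> (\<forall>F \<subseteq> S. F \<noteq> {} \<longrightarrow> gf2_sum F \<noteq> {})"

definition PG_ground :: "nat \<Rightarrow> nat set set" where
  "PG_ground r = {v. v \<subseteq> {..<r} \<and> v \<noteq> {}}"

definition PG_indep :: "nat \<Rightarrow> nat set set \<Rightarrow> bool" where
  "PG_indep r S \<longleftrightarrow> S \<subseteq> PG_ground r \<and> gf2_indep S"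

end

theory Submission
  imports Defs
begin

text \<open>
  Since M has no 2-claw, every line cl {x, y} of M contains a third point.
  If e lies outside a flat F, the lines joining e to the points of F carry pairwise
  distinct third points outside F, so cl (F + e) has at least 2 |F| + 1 elements.
  Hence (|F| + 1) 2^(rk G - rk F) <= |G| + 1 for flats F of G, and with F empty and
  G = E this gives |E| >= 2^r - 1.

  If |E| = 2^r - 1, every flat F attains the bound, so cl (F + e) consists exactly of
  F, e and the third points of the lines through e; in particular lines have three
  points. Adjoining a zero to E and adding two points by taking the third point on
  their line yields an elementary abelian 2-group; associativity comes from counting
  the 7 points of a plane. Expanding in a basis b_0, ..., b_(r-1) identifies E with
  the nonzero vectors of GF(2)^r, and closures with GF(2)-spans, which is
  PG(r-1, 2).
\<close>

section \<open>Basic matroid theory\<close>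

locale indep_matroid =
  fixes E :: "'a set" and I :: "'a set \<Rightarrow> bool"
  assumes matroid: "matroid E I"
begin

abbreviation cl where "cl \<equiv> mclosure E I"
abbreviation rk where "rk \<equiv> mrk I"

lemma finite_ground: "finite E"
  using matroid unfolding matroid_def by blast

lemma indep_subset_ground: "I X \<Longrightarrow> X \<subseteq> E"
  using matroid unfolding matroid_def by blast

lemma indep_finite: "I X \<Longrightarrow> finite X"
  using indep_subset_ground finite_ground finite_subset by blast

lemma indep_subset: "I X \<Longrightarrow> Y \<subseteq> X \<Longrightarrow> I Y"
  using matroid unfolding matroid_def by blast

lemma indep_empty: "I {}"
  using matroid unfolding matroid_def by blast

lemma indep_augment: "I X \<Longrightarrow> I Y \<Longrightarrow> card X < card Y \<Longrightarrow> \<exists>e\<in>Y - X. I (insert e X)"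
  using matroid unfolding matroid_def by blast

lemma finite_indep_cards: "finite {card Y | Y. Y \<subseteq> X \<and> I Y}"
proof -
  have "{card Y | Y. Y \<subseteq> X \<and> I Y} \<subseteq> card ` Pow E"
    using indep_subset_ground by blast
  then show ?thesis
    using finite_ground finite_subset by blast
qed

lemma card_indep_le_rank: "I Y \<Longrightarrow> Y \<subseteq> X \<Longrightarrow> card Y \<le> rk X"
  unfolding mrk_def using finite_indep_cards by (intro Max_ge) auto

lemma rank_attained: obtains Y where "Y \<subseteq> X" "I Y" "card Y = rk X"
proof -
  have "rk X \<in> {card Y | Y. Y \<subseteq> X \<and> I Y}"
    unfolding mrk_def using finite_indep_cards indep_empty by (intro Max_in) auto
  then show ?thesis
    using that by auto
qed

definition basis_of :: "'a set \<Rightarrow> 'a set \<Rightarrow> bool" where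
  "basis_of X B \<longleftrightarrow> B \<subseteq> X \<and> I B \<and> (\<forall>e\<in>X - B. \<not> I (insert e B))"

lemma card_basis: assumes "basis_of X B" shows "card B = rk X"
proof -
  obtain Y where Y: "Y \<subseteq> X" "I Y" "card Y = rk X"
    using rank_attained by blast
  have "card B \<le> rk X"
    using assms card_indep_le_rank unfolding basis_of_def by blast
  moreover have "\<not> card B < card Y"
  proof
    assume "card B < card Y"
    then obtain e where "e \<in> Y - B" "I (insert e B)"
      using indep_augment Y assms unfolding basis_of_def by blast
    then show False
      using assms Y unfolding basis_of_def by blast
  qed
  ultimately show ?thesis
    using Y by simp
qed

lemma basis_extend:
  assumes "I Y" "Y \<subseteq> X"
  obtains B where "Y \<subseteq> B" "basis_of X B"
proof -
  define S where "S = {Z. Z \<subseteq> X \<and> I Z}"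
  have "S \<subseteq> Pow E"
    using indep_subset_ground unfolding S_def by blast
  then have "finite S"
    using finite_ground finite_subset by blast
  moreover have "Y \<in> S"
    using assms unfolding S_def by blast
  ultimately obtain B where B: "B \<in> S" "Y \<subseteq> B" "\<forall>Z\<in>S. B \<subseteq> Z \<longrightarrow> B = Z"
    using finite_has_maximal2 by metis
  have "basis_of X B"
    using B unfolding S_def basis_of_def by blast
  then show ?thesis
    using that B by blast
qed

lemma basis_exists: obtains B where "basis_of X B"
  using basis_extend[OF indep_empty] by blast

lemma rank_indep: "I X \<Longrightarrow> rk X = card X"
  using card_basis[of X X] unfolding basis_of_def by auto

lemma rank_mono: "X \<subseteq> Y \<Longrightarrow> rk X \<le> rk Y"
  by (metis basis_exists card_basis card_indep_le_rank basis_of_def subset_trans)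

lemma basis_enumeration:
  obtains b :: "nat \<Rightarrow> 'a" where "inj_on b {..<rk E}" "basis_of E (b ` {..<rk E})"
proof -
  obtain B where B: "basis_of E B"
    by (rule basis_exists)
  then have "finite B" "card B = rk E"
    using card_basis indep_finite unfolding basis_of_def by auto
  then obtain b where "bij_betw b {..<rk E} B"
    using ex_bij_betw_nat_finite by (metis atLeast0LessThan)
  then show ?thesis
    using that B unfolding bij_betw_def by blast
qed

lemma closure_via_basis:
  assumes "X \<subseteq> E" "basis_of X B"
  shows "cl X = {e\<in>E. e \<in> B \<or> \<not> I (insert e B)}"
proof (intro set_eqI iffI)
  fix e assume "e \<in> cl X"
  then have eE: "e \<in> E" and eq: "rk (insert e X) = rk X"
    unfolding mclosure_def by auto
  show "e \<in> {e\<in>E. e \<in> B \<or> \<not> I (insert e B)}"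
  proof (cases "e \<in> X")
    case True
    then show ?thesis
      using assms eE unfolding basis_of_def by auto
  next
    case False
    then have "e \<notin> B"
      using assms unfolding basis_of_def by auto
    have "\<not> I (insert e B)"
    proof
      assume "I (insert e B)"
      then have "card (insert e B) \<le> rk (insert e X)"
        using assms unfolding basis_of_def by (intro card_indep_le_rank) auto
      then show False
        using eq card_basis[OF assms(2)] \<open>e \<notin> B\<close> assms indep_finite
        unfolding basis_of_def by auto
    qed
    then show ?thesis
      using eE by blast
  qed
next
  fix e assume e: "e \<in> {e\<in>E. e \<in> B \<or> \<not> I (insert e B)}"
  show "e \<in> cl X"
  proof (cases "e \<in> X")
    case True
    then show ?thesis
      using e unfolding mclosure_def by (simp add: insert_absorb)
  next
    case False
    then have "basis_of (insert e X) B"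
      using assms e unfolding basis_of_def by auto
    then have "rk (insert e X) = rk X"
      using card_basis assms by metis
    then show ?thesis
      using e unfolding mclosure_def by auto
  qed
qed

lemma closure_subset_ground: "cl X \<subseteq> E"
  unfolding mclosure_def by auto

lemma subset_closure: "X \<subseteq> E \<Longrightarrow> X \<subseteq> cl X"
  unfolding mclosure_def by (auto simp: insert_absorb)

lemma basis_of_closure: "X \<subseteq> E \<Longrightarrow> basis_of X B \<Longrightarrow> basis_of (cl X) B"
  using subset_closure closure_via_basis unfolding basis_of_def by auto

lemma closure_basis: "X \<subseteq> E \<Longrightarrow> basis_of X B \<Longrightarrow> cl B = cl X"
  using closure_via_basis[of X B] closure_via_basis[of B B] unfolding basis_of_def by auto

lemma closure_idem: assumes "X \<subseteq> E" shows "cl (cl X) = cl X"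
proof -
  obtain B where B: "basis_of X B"
    using basis_exists by blast
  show ?thesis
    using closure_via_basis[OF assms B]
      closure_via_basis[OF closure_subset_ground basis_of_closure[OF assms B]] by simp
qed

lemma rank_closure: assumes "X \<subseteq> E" shows "rk (cl X) = rk X"
proof -
  obtain B where B: "basis_of X B"
    using basis_exists by blast
  show ?thesis
    using card_basis[OF B] card_basis[OF basis_of_closure[OF assms B]] by simp
qed

lemma closure_mono: assumes "X \<subseteq> Y" "Y \<subseteq> E" shows "cl X \<subseteq> cl Y"
proof -
  obtain B where B: "basis_of X B"
    using basis_exists by blast
  then have "I B" "B \<subseteq> Y"
    using assms unfolding basis_of_def by auto
  then obtain B' where B': "B \<subseteq> B'" "basis_of Y B'"
    by (rule basis_extend)
  show ?thesis
    unfolding closure_via_basis[OF subset_trans[OF assms] B] closure_via_basis[OF assms(2) B'(2)]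
    using B' indep_subset[of "insert _ B'" "insert _ B"] by blast
qed

lemma closure_eq_if_rank_le:
  assumes "X \<subseteq> E" "Y \<subseteq> cl X" "rk X \<le> rk Y"
  shows "cl Y = cl X"
proof -
  have YE: "Y \<subseteq> E"
    using assms closure_subset_ground by blast
  obtain B where B: "basis_of Y B"
    using basis_exists by blast
  have "basis_of (cl X) B"
    unfolding basis_of_def
  proof (intro conjI ballI notI)
    show "B \<subseteq> cl X" "I B"
      using B assms unfolding basis_of_def by auto
    fix e assume e: "e \<in> cl X - B" "I (insert e B)"
    then have "card (insert e B) \<le> rk (cl X)"
      using \<open>B \<subseteq> cl X\<close> by (intro card_indep_le_rank) auto
    then show False
      using e \<open>I B\<close> indep_finite card_basis[OF B] rank_closure[OF assms(1)] assms(3) by simp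
  qed
  then show ?thesis
    using closure_via_basis[OF YE B] closure_via_basis[OF closure_subset_ground \<open>basis_of (cl X) B\<close>]
      closure_idem[OF assms(1)] by simp
qed

lemma indep_insert_if_notin_closure: "I Y \<Longrightarrow> e \<in> E \<Longrightarrow> e \<notin> cl Y \<Longrightarrow> I (insert e Y)"
  using closure_via_basis[OF indep_subset_ground, of Y Y] unfolding basis_of_def by auto

lemma notin_closure_if_indep_insert: assumes "I (insert x Y)" "x \<notin> Y" shows "x \<notin> cl Y"
proof -
  have "I Y"
    using assms indep_subset by blast
  then show ?thesis
    using closure_via_basis[OF indep_subset_ground, of Y Y] assms unfolding basis_of_def by auto
qed

lemma indep_iff_notin_closure_remove:
  assumes "X \<subseteq> E"
  shows "I X \<longleftrightarrow> (\<forall>x\<in>X. x \<notin> cl (X - {x}))"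
proof
  assume "I X"
  then show "\<forall>x\<in>X. x \<notin> cl (X - {x})"
    using notin_closure_if_indep_insert[of _ "X - {_}"] by (metis Diff_iff insert_Diff singletonI)
next
  assume H: "\<forall>x\<in>X. x \<notin> cl (X - {x})"
  show "I X"
  proof (rule ccontr)
    assume "\<not> I X"
    obtain B where B: "basis_of X B"
      using basis_exists by blast
    then obtain x where x: "x \<in> X" "x \<notin> B"
      using \<open>\<not> I X\<close> unfolding basis_of_def by (metis subsetI subset_antisym)
    then have "x \<in> cl B"
      using closure_via_basis[of B B] B assms unfolding basis_of_def by auto
    moreover have "cl B \<subseteq> cl (X - {x})"
      using B x assms unfolding basis_of_def by (intro closure_mono) auto
    ultimately show False
      using H x by auto
  qed
qed

lemma flat_closure: "X \<subseteq> E \<Longrightarrow> flat E I (cl X)"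
  unfolding flat_def using closure_idem closure_subset_ground by auto

lemma flat_ground: "flat E I E"
  unfolding flat_def using closure_subset_ground subset_closure by blast

lemma closure_subset_flat: "flat E I F \<Longrightarrow> X \<subseteq> F \<Longrightarrow> cl X \<subseteq> F"
  unfolding flat_def using closure_mono by blast

lemma closure_insert_closure:
  assumes "X \<subseteq> E" "e \<in> E"
  shows "cl (insert e (cl X)) = cl (insert e X)"
proof
  show "cl (insert e X) \<subseteq> cl (insert e (cl X))"
    using subset_closure[OF assms(1)] closure_subset_ground assms by (intro closure_mono) auto
  have "insert e (cl X) \<subseteq> cl (insert e X)"
    using closure_mono[of X "insert e X"] subset_closure[of "insert e X"] assms by auto
  then show "cl (insert e (cl X)) \<subseteq> cl (insert e X)"
    using closure_subset_flat flat_closure assms by simp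
qed

lemma rank_closure_insert:
  assumes F: "flat E I F" and e: "e \<in> E" "e \<notin> F"
  shows "rk (cl (insert e F)) = Suc (rk F)"
proof -
  have FE: "F \<subseteq> E"
    using F unfolding flat_def by auto
  obtain B where B: "basis_of F B"
    using basis_exists by blast
  have "cl B \<subseteq> F"
    using closure_subset_flat[OF F] B unfolding basis_of_def by auto
  then have Ie: "I (insert e B)"
    using indep_insert_if_notin_closure B e unfolding basis_of_def by auto
  have "basis_of (insert e F) (insert e B)"
    using B Ie indep_subset[of "insert _ (insert e B)" "insert _ B"] unfolding basis_of_def by auto
  then have "rk (insert e F) = Suc (card B)"
    using card_basis B e indep_finite unfolding basis_of_def by (metis card_insert_disjoint subsetD)
  then show ?thesis
    using rank_closure[of "insert e F"] FE e card_basis[OF B] by simp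
qed

end

section \<open>Simple matroids without 2-claws\<close>

locale simple_no_2claw = indep_matroid +
  assumes simple: "simple_matroid E I"
    and no_2claw: "\<not> (\<exists>X. claw E I X \<and> card X = 2)"
begin

lemma indep_pair: "x \<in> E \<Longrightarrow> y \<in> E \<Longrightarrow> I {x, y}"
  using simple unfolding simple_matroid_def by (simp add: card_insert_le_m1)

lemma rank_singleton: "x \<in> E \<Longrightarrow> rk {x} = 1"
  using rank_indep[OF indep_pair[of x x]] by simp

lemma closure_empty: "cl {} = {}"
  using rank_singleton rank_indep[OF indep_empty] unfolding mclosure_def by auto

lemma flat_empty: "flat E I {}"
  unfolding flat_def using closure_empty by simp

lemma closure_singleton: assumes "x \<in> E" shows "cl {x} = {x}"
proof -
  have "y = x" if "y \<in> cl {x}" for y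
  proof (rule ccontr)
    assume "y \<noteq> x"
    from that have "y \<in> E" "rk {y, x} = rk {x}"
      unfolding mclosure_def by auto
    then show False
      using rank_indep[OF indep_pair[of y x]] rank_singleton[OF assms] \<open>y \<noteq> x\<close> assms by simp
  qed
  then show ?thesis
    using subset_closure[of "{x}"] assms by auto
qed

lemma exists_third_point:
  assumes "x \<in> E" "y \<in> E" "x \<noteq> y"
  shows "\<exists>z\<in>cl {x, y}. z \<noteq> x \<and> z \<noteq> y"
proof (rule ccontr)
  assume "\<not> ?thesis"
  then have "cl {x, y} = {x, y}"
    using subset_closure[of "{x, y}"] assms by auto
  then have "claw E I {x, y}"
    unfolding claw_def flat_def using assms indep_pair by auto
  then show False
    using no_2claw assms by auto
qed

text \<open>The third point is unique only in the extremal case, see \<open>line_eq\<close>.\<close>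

definition third :: "'a \<Rightarrow> 'a \<Rightarrow> 'a" where
  "third x y = (SOME z. z \<in> cl {x, y} \<and> z \<noteq> x \<and> z \<noteq> y)"

lemma third_commute: "third x y = third y x"
  unfolding third_def by (simp add: insert_commute conj_commute)

lemma
  assumes "x \<in> E" "y \<in> E" "x \<noteq> y"
  shows third_in_line: "third x y \<in> cl {x, y}"
    and third_neq_left: "third x y \<noteq> x"
    and third_neq_right: "third x y \<noteq> y"
    and third_in_ground: "third x y \<in> E"
proof -
  have "\<exists>z. z \<in> cl {x, y} \<and> z \<noteq> x \<and> z \<noteq> y"
    using exists_third_point[OF assms] by blast
  then have "third x y \<in> cl {x, y} \<and> third x y \<noteq> x \<and> third x y \<noteq> y"
    unfolding third_def by (rule someI_ex)
  then show "third x y \<in> cl {x, y}" "third x y \<noteq> x" "third x y \<noteq> y" "third x y \<in> E"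
    using closure_subset_ground by auto
qed

lemma line_eq_if_two_points:
  assumes "a \<in> E" "b \<in> E" "a \<noteq> b" "c \<in> cl {a, b}" "d \<in> cl {a, b}" "c \<noteq> d"
  shows "cl {c, d} = cl {a, b}"
proof (rule closure_eq_if_rank_le)
  have "c \<in> E" "d \<in> E"
    using assms closure_subset_ground by auto
  then show "rk {a, b} \<le> rk {c, d}"
    using rank_indep[OF indep_pair] assms by simp
qed (use assms in auto)

lemma line_through_third:
  assumes "x \<in> E" "y \<in> E" "x \<noteq> y"
  shows "cl {x, third x y} = cl {x, y}"
proof (rule line_eq_if_two_points[OF assms])
  show "x \<in> cl {x, y}"
    using subset_closure[of "{x, y}"] assms by auto
qed (use third_in_line[OF assms] third_neq_left[OF assms] in auto)

lemma third_notin_flat: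
  assumes F: "flat E I F" and e: "e \<in> E" "e \<notin> F" and x: "x \<in> F"
  shows "third e x \<notin> F"
proof
  assume "third e x \<in> F"
  have xE: "x \<in> E" and "x \<noteq> e"
    using F e x unfolding flat_def by auto
  then have "cl {x, third e x} = cl {e, x}"
    using line_through_third[of x e] e by (simp add: third_commute insert_commute)
  moreover have "cl {x, third e x} \<subseteq> F"
    using closure_subset_flat[OF F] x \<open>third e x \<in> F\<close> by auto
  ultimately show False
    using subset_closure[of "{e, x}"] e xE by auto
qed

lemma inj_on_third:
  assumes F: "flat E I F" and e: "e \<in> E" "e \<notin> F"
  shows "inj_on (third e) F"
proof
  fix x x' assume x: "x \<in> F" "x' \<in> F" and eq: "third e x = third e x'"
  show "x = x'"
  proof (rule ccontr)
    assume "x \<noteq> x'"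
    have xE: "x \<in> E" "x' \<in> E" and ne: "e \<noteq> x" "e \<noteq> x'"
      using x F e unfolding flat_def by auto
    have "cl {e, x} = cl {e, x'}"
      using line_through_third[OF e(1) xE(1) ne(1)] line_through_third[OF e(1) xE(2) ne(2)] eq
      by simp
    then have "x' \<in> cl {e, x}"
      using subset_closure[of "{e, x'}"] xE e by auto
    moreover have "x \<in> cl {e, x}"
      using subset_closure[of "{e, x}"] xE e by auto
    ultimately have "cl {x, x'} = cl {e, x}"
      using line_eq_if_two_points[OF e(1) xE(1) ne(1)] \<open>x \<noteq> x'\<close> by blast
    moreover have "cl {x, x'} \<subseteq> F"
      using closure_subset_flat[OF F] x by auto
    ultimately show False
      using subset_closure[of "{e, x}"] e xE by auto
  qed
qed

lemma subset_closure_insert_flat: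
  assumes F: "flat E I F" and e: "e \<in> E" "e \<notin> F"
  shows "F \<union> insert e (third e ` F) \<subseteq> cl (insert e F)"
proof -
  have FE: "F \<subseteq> E"
    using F unfolding flat_def by auto
  have "cl {e, x} \<subseteq> cl (insert e F)" if "x \<in> F" for x
    using that FE e by (intro closure_mono) auto
  then show ?thesis
    using third_in_line[OF e(1)] subset_closure[of "insert e F"] FE e by blast
qed

lemma card_closure_insert_flat:
  assumes F: "flat E I F" and e: "e \<in> E" "e \<notin> F"
  shows "card (F \<union> insert e (third e ` F)) = 2 * card F + 1"
proof -
  have fin: "finite F"
    using F finite_ground finite_subset unfolding flat_def by blast
  have "e \<notin> third e ` F"
    using third_neq_left e F unfolding flat_def by (metis imageE subsetD)
  moreover have "F \<inter> third e ` F = {}"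
    using third_notin_flat[OF assms] by auto
  ultimately show ?thesis
    using fin e card_image[OF inj_on_third[OF assms]] by (simp add: card_Un_disjoint)
qed

lemma card_flat_doubling:
  assumes "flat E I F" "flat E I G" "F \<subseteq> G"
  shows "(card F + 1) * 2 ^ (rk G - rk F) \<le> card G + 1"
  using assms
proof (induction "rk G - rk F" arbitrary: F)
  case 0
  have "card F \<le> card G"
    using 0 finite_ground finite_subset unfolding flat_def by (intro card_mono) auto
  then show ?case
    by (simp flip: "0.hyps")
next
  case (Suc d)
  have GE: "G \<subseteq> E" and FE: "F \<subseteq> E"
    using Suc unfolding flat_def by auto
  obtain e where e: "e \<in> G" "e \<notin> F"
    using Suc by (metis subsetI subset_antisym diff_self_eq_0 nat.distinct(1))
  let ?F = "cl (insert e F)"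
  have "rk ?F = Suc (rk F)"
    using rank_closure_insert[OF Suc.prems(1)] e GE by auto
  then have d: "d = rk G - rk ?F"
    using Suc.hyps(2) by simp
  have "flat E I ?F" "?F \<subseteq> G"
    using flat_closure closure_subset_flat[OF Suc.prems(2)] Suc.prems(3) e FE GE by auto
  then have IH: "(card ?F + 1) * 2 ^ d \<le> card G + 1"
    unfolding d using Suc.hyps(1)[OF d] Suc.prems(2) by blast
  have "2 * card F + 1 \<le> card ?F"
    using card_closure_insert_flat[OF Suc.prems(1)] subset_closure_insert_flat[OF Suc.prems(1)] e GE
      finite_subset[OF closure_subset_ground finite_ground] by (metis card_mono subsetD)
  then have "(card F + 1) * 2 ^ Suc d \<le> (card ?F + 1) * 2 ^ d"
    using mult_le_mono1[of "2 * card F + 2" "card ?F + 1" "2 ^ d"] by simp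
  with IH show ?case
    unfolding Suc.hyps(2)[symmetric] by linarith
qed

lemma card_ground_lower_bound: "2 ^ rk E \<le> card E + 1"
  using card_flat_doubling[OF flat_empty flat_ground] rank_indep[OF indep_empty] by simp

end

section \<open>The extremal case\<close>

definition with_zero :: "'a set \<Rightarrow> 'a option set" where
  "with_zero X = insert None (Some ` X)"

locale extremal_no_2claw = simple_no_2claw +
  assumes extremal: "card E = 2 ^ rk E - 1"
begin

lemma card_flat: assumes F: "flat E I F" shows "card F + 1 = 2 ^ rk F"
proof -
  have "rk F \<le> rk E"
    using F rank_mono unfolding flat_def by blast
  then have "2 ^ rk E = 2 ^ rk F * (2::nat) ^ (rk E - rk F)"
    by (simp flip: power_add)
  moreover have "(card F + 1) * 2 ^ (rk E - rk F) \<le> 2 ^ rk E"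
    using card_flat_doubling[OF F flat_ground] F extremal unfolding flat_def by simp
  ultimately have "card F + 1 \<le> 2 ^ rk F"
    by (metis mult_le_cancel2 zero_less_numeral zero_less_power)
  moreover have "2 ^ rk F \<le> card F + 1"
    using card_flat_doubling[OF flat_empty F] rank_indep[OF indep_empty] by simp
  ultimately show ?thesis
    by simp
qed

lemma closure_insert_flat:
  assumes F: "flat E I F" and e: "e \<in> E" "e \<notin> F"
  shows "cl (insert e F) = F \<union> insert e (third e ` F)"
proof -
  have FE: "F \<subseteq> E"
    using F unfolding flat_def by auto
  have "card (cl (insert e F)) + 1 = 2 ^ Suc (rk F)"
    using card_flat[OF flat_closure] rank_closure_insert[OF assms] FE e by simp
  also have "\<dots> = 2 * (card F + 1)"
    using card_flat[OF F] by simp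
  finally have "card (cl (insert e F)) = card (F \<union> insert e (third e ` F))"
    using card_closure_insert_flat[OF assms] by simp
  then show ?thesis
    using subset_closure_insert_flat[OF assms] finite_subset[OF closure_subset_ground finite_ground]
    by (intro card_subset_eq[symmetric]) auto
qed

lemma line_eq:
  assumes "x \<in> E" "y \<in> E" "x \<noteq> y"
  shows "cl {x, y} = {x, y, third x y}"
proof -
  have "flat E I {x}"
    using flat_closure[of "{x}"] closure_singleton assms by simp
  then show ?thesis
    using closure_insert_flat[of "{x}" y] assms by (auto simp: insert_commute third_commute)
qed

lemma third_third:
  assumes "x \<in> E" "y \<in> E" "x \<noteq> y"
  shows "third x (third x y) = y"
proof -
  have t: "third x y \<in> E" "x \<noteq> third x y"
    using third_in_ground[OF assms] third_neq_left[OF assms] by auto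
  have "{x, third x y, third x (third x y)} = {x, y, third x y}"
    using line_eq[OF assms(1) t] line_through_third[OF assms] line_eq[OF assms] by simp
  moreover have "third x (third x y) \<noteq> x" "third x (third x y) \<noteq> third x y"
    using third_neq_left[OF assms(1) t] third_neq_right[OF assms(1) t] by auto
  ultimately show ?thesis
    by blast
qed

lemma third_of_dependent:
  assumes "x \<in> E" "y \<in> E" "z \<in> E" "x \<noteq> y" "z \<noteq> x" "z \<noteq> y" "\<not> I {x, y, z}"
  shows "z = third x y"
proof -
  have "z \<in> cl {x, y}"
    using indep_insert_if_notin_closure[OF indep_pair, of x y z] assms by (auto simp: insert_commute)
  then show ?thesis
    using line_eq assms by auto
qed

lemma plane_eq:
  assumes "x \<in> E" "y \<in> E" "z \<in> E" "x \<noteq> y" "z \<notin> cl {x, y}"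
  shows "cl {x, y, z} = {x, y, third x y} \<union> insert z (third z ` {x, y, third x y})"
proof -
  have "cl {x, y, z} = cl (insert z (cl {x, y}))"
    using closure_insert_closure[of "{x, y}" z] assms by (simp add: insert_commute)
  then show ?thesis
    using closure_insert_flat[OF flat_closure, of "{x, y}" z] line_eq[of x y] assms by simp
qed

lemma third_assoc:
  assumes "I {x, y, z}" "x \<noteq> y" "y \<noteq> z" "x \<noteq> z"
  shows "third x (third y z) = third z (third x y)"
proof -
  have E: "x \<in> E" "y \<in> E" "z \<in> E"
    using indep_subset_ground[OF assms(1)] by auto
  let ?P = "cl {x, y, z}"
  have "card ?P + 1 = 2 ^ 3"
    using card_flat[OF flat_closure] rank_closure[of "{x, y, z}"] rank_indep[OF assms(1)] E assms
    by auto
  then have card_plane: "card ?P = 7"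
    by simp
  have "z \<notin> cl {x, y}" "x \<notin> cl {y, z}"
    using notin_closure_if_indep_insert[of _ "{_, _}"] assms by (auto simp: insert_commute)
  then have "?P = {x, y, third x y} \<union> insert z (third z ` {x, y, third x y})"
    and plane_yz: "?P = {y, z, third y z} \<union> insert x (third x ` {y, z, third y z})"
    using plane_eq[of x y z] plane_eq[of y z x] E assms by (simp_all add: insert_commute)
  txt \<open>
    Otherwise the plane, which has 7 points, would consist of these six points.
    Its description from the line xy then leaves only third z (third x y).
  \<close>
  moreover have "third x (third y z) \<notin> {y, z, third y z, x, third x y, third x z}"
  proof
    let ?S = "{y, z, third y z, x, third x y, third x z}"
    assume "third x (third y z) \<in> ?S"
    then have "?P = ?S"
      using plane_yz by auto
    moreover have "card ?S \<le> 6"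
      using card_length[of "[y, z, third y z, x, third x y, third x z]"] by simp
    ultimately show False
      using card_plane by simp
  qed
  ultimately show ?thesis
    by (auto simp: third_commute)
qed

text \<open>
  With None as zero, the sum of two distinct points is the third point on their
  line; on \<open>with_zero E\<close> this is the additive group of GF(2)^r.
\<close>

definition padd :: "'a option \<Rightarrow> 'a option \<Rightarrow> 'a option" (infixl "\<oplus>" 65) where
  "x \<oplus> y = (case x of None \<Rightarrow> y
     | Some a \<Rightarrow> (case y of None \<Rightarrow> x | Some b \<Rightarrow> if a = b then None else Some (third a b)))"

lemma padd_None_left [simp]: "None \<oplus> y = y"
  unfolding padd_def by simp

lemma padd_None_right [simp]: "x \<oplus> None = x"
  unfolding padd_def by (cases x) simp_all

lemma padd_Some_Some: "Some a \<oplus> Some b = (if a = b then None else Some (third a b))"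
  unfolding padd_def by simp

lemma padd_self [simp]: "x \<oplus> x = None"
  unfolding padd_def by (cases x) simp_all

lemma padd_commute: "x \<oplus> y = y \<oplus> x"
  unfolding padd_def by (cases x; cases y) (auto simp: third_commute)

lemma padd_closed: "x \<in> with_zero E \<Longrightarrow> y \<in> with_zero E \<Longrightarrow> x \<oplus> y \<in> with_zero E"
  unfolding with_zero_def by (auto simp: padd_Some_Some third_in_ground split: if_split_asm)

lemma padd_cancel_left:
  assumes "x \<in> with_zero E" "y \<in> with_zero E"
  shows "x \<oplus> (x \<oplus> y) = y"
proof (cases "x = y \<or> x = None \<or> y = None")
  case False
  then obtain a b where "x = Some a" "y = Some b" "a \<in> E" "b \<in> E" "a \<noteq> b"
    using assms unfolding with_zero_def by auto
  then show ?thesis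
    using third_third third_neq_left[of a b] by (simp add: padd_Some_Some)
qed auto

lemma padd_assoc_Some:
  assumes "a \<in> E" "b \<in> E" "c \<in> E"
  shows "(Some a \<oplus> Some b) \<oplus> Some c = Some a \<oplus> (Some b \<oplus> Some c)"
proof -
  have cancel: "Some u \<oplus> (Some u \<oplus> Some v) = Some v" if "u \<in> E" "v \<in> E" for u v
    using padd_cancel_left[of "Some u" "Some v"] that unfolding with_zero_def by simp
  consider "a = b" | "b = c" | "a = c" | "a \<noteq> b" "b \<noteq> c" "a \<noteq> c" "I {a, b, c}"
    | "a \<noteq> b" "b \<noteq> c" "a \<noteq> c" "c = third a b"
    using third_of_dependent assms by blast
  then show ?thesis
  proof cases
    case 1
    then show ?thesis
      using cancel[of a c] assms by simp
  next
    case 2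
    have "(Some a \<oplus> Some b) \<oplus> Some b = Some b \<oplus> (Some b \<oplus> Some a)"
      by (metis padd_commute)
    then show ?thesis
      using cancel[of b a] 2 assms by simp
  next
    case 3
    have "(Some a \<oplus> Some b) \<oplus> Some c = Some b"
      using cancel[of a b] 3 assms by (metis padd_commute)
    moreover have "Some a \<oplus> (Some b \<oplus> Some c) = Some b"
      using cancel[of a b] 3 assms by (metis padd_commute)
    ultimately show ?thesis
      by simp
  next
    case 4
    have "c \<notin> cl {a, b}" "a \<notin> cl {b, c}"
      using notin_closure_if_indep_insert[of _ "{_, _}"] 4 by (auto simp: insert_commute)
    then have "third a b \<noteq> c" "a \<noteq> third b c"
      using third_in_line assms 4 by metis+
    then show ?thesis
      using third_assoc[OF 4(4,1,2,3)] 4 by (simp add: padd_Some_Some third_commute)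
  next
    case 5
    have "third b (third a b) = a"
      using third_third[of b a] assms 5 by (simp add: third_commute)
    then show ?thesis
      using 5 third_neq_right[of a b] assms by (simp add: padd_Some_Some)
  qed
qed

lemma padd_assoc:
  assumes "x \<in> with_zero E" "y \<in> with_zero E" "z \<in> with_zero E"
  shows "(x \<oplus> y) \<oplus> z = x \<oplus> (y \<oplus> z)"
  using assms padd_assoc_Some unfolding with_zero_def by auto

lemma padd_medial:
  assumes "w \<in> with_zero E" "x \<in> with_zero E" "y \<in> with_zero E" "z \<in> with_zero E"
  shows "(w \<oplus> x) \<oplus> (y \<oplus> z) = (w \<oplus> y) \<oplus> (x \<oplus> z)"
proof -
  have "(w \<oplus> x) \<oplus> (y \<oplus> z) = w \<oplus> ((x \<oplus> y) \<oplus> z)"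
    using assms padd_assoc padd_closed by metis
  also have "\<dots> = w \<oplus> ((y \<oplus> x) \<oplus> z)"
    by (simp only: padd_commute[of x y])
  also have "\<dots> = (w \<oplus> y) \<oplus> (x \<oplus> z)"
    using assms padd_assoc padd_closed by metis
  finally show ?thesis .
qed

lemma with_zero_closure_insert:
  assumes C: "flat E I C" and a: "a \<in> E"
  shows "with_zero (cl (insert a C)) = with_zero C \<union> (\<oplus>) (Some a) ` with_zero C"
proof (cases "a \<in> C")
  case True
  have "third a c \<in> C" if "c \<in> C" "c \<noteq> a" for c
    using third_in_line[of a c] closure_subset_flat[OF C, of "{a, c}"] a C True that
    unfolding flat_def by auto
  then have "(\<oplus>) (Some a) ` with_zero C \<subseteq> with_zero C"
    using True unfolding with_zero_def by (auto simp: padd_Some_Some split: if_split_asm)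
  moreover have "cl (insert a C) = C"
    using C True unfolding flat_def by (simp add: insert_absorb)
  ultimately show ?thesis
    by auto
next
  case False
  then have "(\<oplus>) (Some a) ` with_zero C = insert (Some a) (Some ` third a ` C)"
    unfolding with_zero_def by (force simp: padd_Some_Some)
  then show ?thesis
    using closure_insert_flat[OF C a False] unfolding with_zero_def by auto
qed

end

section \<open>Binary coordinates\<close>

definition gf2_span :: "nat set set \<Rightarrow> nat set set" where
  "gf2_span V = {gf2_sum G | G. G \<subseteq> V}"

lemma gf2_sum_insert:
  assumes "finite G" "v \<notin> G"
  shows "gf2_sum (insert v G) = sym_diff v (gf2_sum G)"
proof -
  have "card {u \<in> insert v G. i \<in> u}
      = (if i \<in> v then Suc (card {u \<in> G. i \<in> u}) else card {u \<in> G. i \<in> u})" for i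
  proof -
    have "{u \<in> insert v G. i \<in> u} = (if i \<in> v then insert v {u \<in> G. i \<in> u} else {u \<in> G. i \<in> u})"
      by auto
    then show ?thesis
      using assms by simp
  qed
  then show ?thesis
    unfolding gf2_sum_def by auto
qed

lemma gf2_sum_subset_Union: "gf2_sum G \<subseteq> \<Union> G"
  unfolding gf2_sum_def by (auto dest!: odd_pos simp: card_gt_0_iff)

lemma gf2_span_subset_Pow: "V \<subseteq> Pow A \<Longrightarrow> gf2_span V \<subseteq> Pow A"
  unfolding gf2_span_def using gf2_sum_subset_Union by blast

lemma gf2_span_empty: "gf2_span {} = {{}}"
  unfolding gf2_span_def gf2_sum_def by simp

lemma gf2_span_insert:
  assumes "finite V" "v \<notin> V"
  shows "gf2_span (insert v V) = gf2_span V \<union> sym_diff v ` gf2_span V"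
proof (intro set_eqI iffI)
  fix s assume "s \<in> gf2_span (insert v V)"
  then obtain G where G: "G \<subseteq> insert v V" "s = gf2_sum G"
    unfolding gf2_span_def by auto
  show "s \<in> gf2_span V \<union> sym_diff v ` gf2_span V"
  proof (cases "v \<in> G")
    case True
    then have "s = sym_diff v (gf2_sum (G - {v}))"
      using G gf2_sum_insert[of "G - {v}" v] assms finite_subset by (metis finite_insert insert_Diff Diff_iff singletonI)
    moreover have "G - {v} \<subseteq> V"
      using G by auto
    ultimately show ?thesis
      unfolding gf2_span_def by blast
  next
    case False
    then show ?thesis
      using G unfolding gf2_span_def by blast
  qed
next
  fix s assume "s \<in> gf2_span V \<union> sym_diff v ` gf2_span V"
  then consider "s \<in> gf2_span V" | G where "G \<subseteq> V" "s = sym_diff v (gf2_sum G)"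
    unfolding gf2_span_def by blast
  then show "s \<in> gf2_span (insert v V)"
  proof cases
    case 1
    then show ?thesis
      unfolding gf2_span_def by blast
  next
    case 2
    then have "s = gf2_sum (insert v G)"
      using assms gf2_sum_insert finite_subset by (metis subsetD)
    moreover have "insert v G \<subseteq> insert v V"
      using 2 by auto
    ultimately show ?thesis
      unfolding gf2_span_def by blast
  qed
qed

lemma gf2_indep_iff_notin_span:
  assumes "finite V"
  shows "gf2_indep V \<longleftrightarrow> (\<forall>v\<in>V. v \<notin> gf2_span (V - {v}))"
proof
  assume indep: "gf2_indep V"
  show "\<forall>v\<in>V. v \<notin> gf2_span (V - {v})"
  proof (intro ballI notI)
    fix v assume v: "v \<in> V" "v \<in> gf2_span (V - {v})"
    then obtain G where G: "G \<subseteq> V - {v}" "v = gf2_sum G"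
      unfolding gf2_span_def by auto
    then have "gf2_sum (insert v G) = {}"
      using gf2_sum_insert[of G v] assms finite_subset by auto
    moreover have "insert v G \<subseteq> V"
      using G v by auto
    ultimately show False
      using indep unfolding gf2_indep_def by blast
  qed
next
  assume H: "\<forall>v\<in>V. v \<notin> gf2_span (V - {v})"
  show "gf2_indep V"
    unfolding gf2_indep_def
  proof (intro allI impI notI)
    fix G assume G: "G \<subseteq> V" "G \<noteq> {}" "gf2_sum G = {}"
    then obtain v where v: "v \<in> G"
      by blast
    then have "sym_diff v (gf2_sum (G - {v})) = {}"
      using G gf2_sum_insert[of "G - {v}" v] assms finite_subset by (metis finite_Diff insert_Diff Diff_iff singletonI)
    then have "gf2_sum (G - {v}) = v"
      by auto
    moreover have "G - {v} \<subseteq> V - {v}"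
      using G by auto
    ultimately have "v \<in> gf2_span (V - {v})"
      unfolding gf2_span_def by blast
    then show False
      using H G v by auto
  qed
qed

context extremal_no_2claw
begin

text \<open>\<open>coord b k v\<close> is the point with coordinate vector v with respect to b 0, ..., b (k - 1).\<close>

primrec coord :: "(nat \<Rightarrow> 'a) \<Rightarrow> nat \<Rightarrow> nat set \<Rightarrow> 'a option" where
  "coord b 0 v = None"
| "coord b (Suc k) v = (if k \<in> v then Some (b k) else None) \<oplus> coord b k v"

lemma coord_empty [simp]: "coord b k {} = None"
  by (induction k) simp_all

lemma coord_singleton: "coord b k {i} = (if i < k then Some (b i) else None)"
  by (induction k) (auto simp: less_Suc_eq)

lemma coord_in_with_zero: "b ` {..<k} \<subseteq> E \<Longrightarrow> coord b k v \<in> with_zero E"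
proof (induction k)
  case (Suc k)
  then have "coord b k v \<in> with_zero E" "(if k \<in> v then Some (b k) else None) \<in> with_zero E"
    unfolding with_zero_def by (auto simp: lessThan_Suc)
  then show ?case
    using padd_closed by simp
qed (simp add: with_zero_def)

lemma coord_sym_diff:
  assumes "b ` {..<k} \<subseteq> E"
  shows "coord b k (sym_diff v w) = coord b k v \<oplus> coord b k w"
  using assms
proof (induction k)
  case (Suc k)
  have prefix: "b ` {..<k} \<subseteq> E"
    using Suc.prems by (auto simp: lessThan_Suc)
  define \<beta> where "\<beta> u = (if k \<in> u then Some (b k) else None)" for u
  have \<beta>: "\<beta> u \<in> with_zero E" for u
    using Suc.prems unfolding \<beta>_def with_zero_def by auto
  have coord_Suc: "coord b (Suc k) u = \<beta> u \<oplus> coord b k u" for u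
    by (simp add: \<beta>_def)
  have "\<beta> (sym_diff v w) = \<beta> v \<oplus> \<beta> w"
    unfolding \<beta>_def by auto
  moreover have "coord b k (sym_diff v w) = coord b k v \<oplus> coord b k w"
    using Suc prefix by simp
  ultimately have "coord b (Suc k) (sym_diff v w) = (\<beta> v \<oplus> \<beta> w) \<oplus> (coord b k v \<oplus> coord b k w)"
    by (simp only: coord_Suc)
  also have "\<dots> = (\<beta> v \<oplus> coord b k v) \<oplus> (\<beta> w \<oplus> coord b k w)"
    using padd_medial \<beta> coord_in_with_zero[OF prefix] by auto
  finally show ?case
    by (simp only: coord_Suc)
qed simp

lemma coord_gf2_span:
  assumes "b ` {..<k} \<subseteq> E" "finite V"
  shows "coord b k ` gf2_span V = with_zero (cl {x. Some x \<in> coord b k ` V})"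
  using assms(2)
proof (induction V rule: finite_induct)
  case empty
  then show ?case
    using gf2_span_empty closure_empty unfolding with_zero_def by simp
next
  case (insert v V)
  let ?X = "{x. Some x \<in> coord b k ` V}"
  have XE: "?X \<subseteq> E"
  proof
    fix x assume "x \<in> ?X"
    then obtain u where "coord b k u = Some x"
      by auto
    then show "x \<in> E"
      using coord_in_with_zero[OF assms(1), of u] unfolding with_zero_def by auto
  qed
  have "coord b k ` gf2_span (insert v V)
      = coord b k ` gf2_span V \<union> (\<oplus>) (coord b k v) ` coord b k ` gf2_span V"
    using insert.hyps coord_sym_diff[OF assms(1)] by (simp add: gf2_span_insert image_Un image_image)
  also have "\<dots> = with_zero (cl ?X) \<union> (\<oplus>) (coord b k v) ` with_zero (cl ?X)"
    using insert.IH by simp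
  also have "\<dots> = with_zero (cl {x. Some x \<in> coord b k ` insert v V})"
  proof (cases "coord b k v")
    case None
    then show ?thesis
      by auto
  next
    case (Some a)
    then have "a \<in> E"
      using coord_in_with_zero[OF assms(1), of v] unfolding with_zero_def by auto
    moreover have "{x. Some x \<in> coord b k ` insert v V} = insert a ?X"
      using Some by auto
    ultimately show ?thesis
      using with_zero_closure_insert[OF flat_closure[OF XE]] closure_insert_closure[OF XE] Some
      by simp
  qed
  finally show ?case .
qed

end

locale extremal_with_basis = extremal_no_2claw +
  fixes b :: "nat \<Rightarrow> 'a"
  assumes inj_basis: "inj_on b {..<rk E}"
    and basis: "basis_of E (b ` {..<rk E})"
begin

lemma basis_in_ground: "b ` {..<rk E} \<subseteq> E"
  using basis unfolding basis_of_def by blast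

lemma coord_image: "coord b (rk E) ` Pow {..<rk E} = with_zero E"
proof -
  let ?V = "(\<lambda>i. {i}) ` {..<rk E}"
  have "coord b (rk E) ` ?V = (\<lambda>i. Some (b i)) ` {..<rk E}"
    unfolding image_image by (rule image_cong) (simp_all add: coord_singleton)
  then have "{x. Some x \<in> coord b (rk E) ` ?V} = b ` {..<rk E}"
    by auto
  moreover have "cl (b ` {..<rk E}) = E"
    using closure_basis[OF _ basis] flat_ground unfolding flat_def by simp
  ultimately have "coord b (rk E) ` gf2_span ?V = with_zero E"
    using coord_gf2_span[OF basis_in_ground] by simp
  moreover have "gf2_span ?V \<subseteq> Pow {..<rk E}"
    by (intro gf2_span_subset_Pow) auto
  ultimately show ?thesis
    using coord_in_with_zero[OF basis_in_ground] by blast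
qed

lemma inj_on_coord: "inj_on (coord b (rk E)) (Pow {..<rk E})"
proof (rule eq_card_imp_inj_on)
  have "card (with_zero E) = card E + 1"
    using finite_ground unfolding with_zero_def by (simp add: card_image)
  then show "card (coord b (rk E) ` Pow {..<rk E}) = card (Pow {..<rk E})"
    using coord_image extremal by (simp add: card_Pow)
qed simp

definition pg_point :: "nat set \<Rightarrow> 'a" where
  "pg_point v = the (coord b (rk E) v)"

lemma PG_ground_eq: "PG_ground (rk E) = Pow {..<rk E} - {{}}"
  unfolding PG_ground_def by auto

lemma coord_pg_point:
  assumes "v \<in> PG_ground (rk E)"
  shows "coord b (rk E) v = Some (pg_point v)"
proof -
  have "coord b (rk E) v \<noteq> coord b (rk E) {}"
    using inj_on_coord assms unfolding PG_ground_eq inj_on_def by blast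
  then show ?thesis
    unfolding pg_point_def by auto
qed

lemma bij_pg_point: "bij_betw pg_point (PG_ground (rk E)) E"
proof -
  have "Some ` pg_point ` PG_ground (rk E) = coord b (rk E) ` (Pow {..<rk E} - {{}})"
    using coord_pg_point by (simp add: image_image PG_ground_eq)
  also have "\<dots> = with_zero E - {None}"
    using inj_on_coord coord_image by (simp add: inj_on_image_set_diff)
  finally have "pg_point ` PG_ground (rk E) = E"
    unfolding with_zero_def by (metis Diff_insert_absorb image_iff inj_image_eq_iff inj_Some option.distinct(1))
  moreover have "inj_on pg_point (PG_ground (rk E))"
    using inj_on_coord coord_pg_point unfolding PG_ground_eq inj_on_def by (metis Diff_subset subsetD)
  ultimately show ?thesis
    unfolding bij_betw_def by blast
qed

lemma closure_pg_point_image: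
  assumes "V \<subseteq> PG_ground (rk E)"
  shows "with_zero (cl (pg_point ` V)) = coord b (rk E) ` gf2_span V"
proof -
  have "finite V"
    using assms unfolding PG_ground_eq by (meson finite_Diff finite_Pow_iff finite_lessThan finite_subset)
  moreover have "{x. Some x \<in> coord b (rk E) ` V} = pg_point ` V"
    using coord_pg_point assms by force
  ultimately show ?thesis
    using coord_gf2_span[OF basis_in_ground] by simp
qed

lemma indep_pg_point_iff:
  assumes V: "V \<subseteq> PG_ground (rk E)"
  shows "I (pg_point ` V) \<longleftrightarrow> gf2_indep V"
proof -
  have inj: "inj_on pg_point V"
    using bij_pg_point V unfolding bij_betw_def by (rule inj_on_subset[OF conjunct1])
  have "pg_point v \<notin> cl (pg_point ` V - {pg_point v}) \<longleftrightarrow> v \<notin> gf2_span (V - {v})"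
    if v: "v \<in> V" for v
  proof -
    have "pg_point ` V - {pg_point v} = pg_point ` (V - {v})"
      using inj v by (simp add: inj_on_image_set_diff)
    moreover have "gf2_span (V - {v}) \<subseteq> Pow {..<rk E}" "v \<in> Pow {..<rk E}"
      using gf2_span_subset_Pow[of "V - {v}"] V v unfolding PG_ground_eq by auto
    moreover have "pg_point v \<in> cl (pg_point ` (V - {v}))
        \<longleftrightarrow> Some (pg_point v) \<in> coord b (rk E) ` gf2_span (V - {v})"
      using closure_pg_point_image[of "V - {v}"] V unfolding with_zero_def by auto
    moreover have "coord b (rk E) v = Some (pg_point v)"
      using coord_pg_point V v by blast
    ultimately show ?thesis
      using inj_on_image_mem_iff[OF inj_on_coord] by metis
  qed
  moreover have "pg_point ` V \<subseteq> E"
    using V bij_pg_point unfolding bij_betw_def by blast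
  moreover have "finite V"
    using V unfolding PG_ground_eq by (auto intro: finite_subset[of _ "Pow {..<rk E}"])
  ultimately show ?thesis
    using indep_iff_notin_closure_remove gf2_indep_iff_notin_span by auto
qed

lemma matroid_iso_PG: "matroid_iso E I (PG_ground (rk E)) (PG_indep (rk E))"
proof -
  define f where "f = inv_into (PG_ground (rk E)) pg_point"
  have f: "bij_betw f E (PG_ground (rk E))"
    unfolding f_def by (rule bij_betw_inv_into[OF bij_pg_point])
  have "I X \<longleftrightarrow> PG_indep (rk E) (f ` X)" if "X \<subseteq> E" for X
  proof -
    have "f ` X \<subseteq> PG_ground (rk E)" "pg_point ` f ` X = X"
      using f bij_pg_point that unfolding f_def bij_betw_def
      by (auto simp: image_inv_into_cancel)
    then show ?thesis
      using indep_pg_point_iff[of "f ` X"] unfolding PG_indep_def by simp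
  qed
  then show ?thesis
    unfolding matroid_iso_def using f by blast
qed

end

theorem lemma3p1:
  fixes E :: "'a set" and I :: "'a set \<Rightarrow> bool" and r :: nat
  assumes "matroid E I"
    and "simple_matroid E I"
    and "matroid_rank E I = r"
    and "\<not> (\<exists>X. claw E I X \<and> card X = 2)"
  shows "2 ^ r - 1 \<le> card E
    \<and> (card E = 2 ^ r - 1 \<longrightarrow> matroid_iso E I (PG_ground r) (PG_indep r))"
proof -
  interpret simple_no_2claw E I
    using assms by unfold_locales auto
  have rank: "mrk I E = r"
    using assms(3) unfolding matroid_rank_def by simp
  have "matroid_iso E I (PG_ground r) (PG_indep r)" if "card E = 2 ^ r - 1"
  proof -
    interpret extremal_no_2claw E I
      using that rank by unfold_locales simp
    obtain b where "inj_on b {..<r}" "basis_of E (b ` {..<r})"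
      using basis_enumeration rank by metis
    then interpret extremal_with_basis E I b
      using rank by unfold_locales simp_all
    show ?thesis
      using matroid_iso_PG rank by simp
  qed
  then show ?thesis
    using card_ground_lower_bound rank by auto
qed

end
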